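(* Let $(M,\diamond,\bullet,\alpha_M)$ be a module over the multiplicative Hom-post-Lie algebra $(L,[\cdot,\cdot],\cdot,\alpha)$, and let $k,n$ be non-negative integers. Define $x\diamond^{0,k}m=\alpha_M^{2^k-1}(\alpha^n(x)\diamond m)$ and $x\bullet^{0,k}m=\alpha_M^{2^k-1}(\alpha^n(x)\bullet m)$ for $x\in L$, $m\in M$. Then $(M,\diamond^{0,k},\bullet^{0,k},\alpha_M^{2^k})$ is a module over $(L,\alpha^{2^k-1}\circ[\cdot,\cdot],\alpha^{2^k-1}\circ\cdot,\alpha^{2^k})$.
   Context: All vector spaces are over a field $\mathbb{K}$ of characteristic $\neq 2$. A Hom-Lie algebra is $(L,[\cdot,\cdot],\alpha)$ with $[\cdot,\cdot]$ bilinear skew-symmetric, $\alpha$ linear, and $[\alpha(x),[y,z]]+[\alpha(y),[z,x]]+[\alpha(z),[x,y]]=0$. A Hom-post-Lie algebra $(L,[\cdot,\cdot],\cdot,\alpha)$ is a Hom-Lie algebra with bilinear $\cdot$ such that $\alpha(z)\cdot[x,y]-[z\cdot x,\alpha(y)]-[\alpha(x),z\cdot y]=0$ and $\alpha(z)\cdot(y\cdot x)-\alpha(y)\cdot(z\cdot x)+(y\cdot z)\cdot\alpha(x)-(z\cdot y)\cdot\alpha(x)+[y,z]\cdot\alpha(x)=0$ for all $x,y,z$; it is multiplicative if $\alpha([x,y])=[\alpha(x),\alpha(y)]$ and $\alpha(x\cdot y)=\alpha(x)\cdot\alpha(y)$. A module over $L$ is a vector space $M$ with linear $\alpha_M$ and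 bilinear $\diamond,\bullet:L\otimes M\to M$ such that for all $x,y\in L,m\in M$: (i) $\alpha_M(x\diamond m)=\alpha(x)\diamond\alpha_M(m)$, $\alpha_M(x\bullet m)=\alpha(x)\bullet\alpha_M(m)$; (ii) $[x,y]\diamond\alpha_M(m)=\alpha(x)\diamond(y\diamond m)-\alpha(y)\diamond(x\diamond m)$; (iii) $(x\cdot y)\diamond\alpha_M(m)=\alpha(x)\bullet(y\diamond m)-\alpha(y)\diamond(x\bullet m)$; (iv) $[x,y]\bullet\alpha_M(m)=\alpha(x)\bullet(y\bullet m)-\alpha(y)\bullet(x\bullet m)-(x\cdot y)\bullet\alpha_M(m)+(y\cdot x)\bullet\alpha_M(m)$. The same definition applies to the Hom-post-Lie algebra $(L,\alpha^{2^k-1}\circ[\cdot,\cdot],\alpha^{2^k-1}\circ\cdot,\alpha^{2^k})$. *)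

theory Defs
  imports Complex_Main
begin

definition bilinear_map ::
  "('k::field \<Rightarrow> 'a::ab_group_add \<Rightarrow> 'a) \<Rightarrow> ('k \<Rightarrow> 'b::ab_group_add \<Rightarrow> 'b) \<Rightarrow>
   ('k \<Rightarrow> 'c::ab_group_add \<Rightarrow> 'c) \<Rightarrow> ('a \<Rightarrow> 'b \<Rightarrow> 'c) \<Rightarrow> bool" where
  "bilinear_map sA sB sC f \<longleftrightarrow>
     (\<forall>y. Vector_Spaces.linear sA sC (\<lambda>x. f x y)) \<and>
     (\<forall>x. Vector_Spaces.linear sB sC (f x))"

definition hom_lie_algebra ::
  "('k::field \<Rightarrow> 'l::ab_group_add \<Rightarrow> 'l) \<Rightarrow> ('l \<Rightarrow> 'l \<Rightarrow> 'l) \<Rightarrow> ('l \<Rightarrow> 'l) \<Rightarrow> bool" where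
  "hom_lie_algebra sL br \<alpha> \<longleftrightarrow>
     Vector_Spaces.vector_space sL \<and> bilinear_map sL sL sL br \<and> Vector_Spaces.linear sL sL \<alpha> \<and>
     (\<forall>x y. br x y = - br y x) \<and>
     (\<forall>x y z. br (\<alpha> x) (br y z) + br (\<alpha> y) (br z x) + br (\<alpha> z) (br x y) = 0)"

definition hom_post_lie_algebra ::
  "('k::field \<Rightarrow> 'l::ab_group_add \<Rightarrow> 'l) \<Rightarrow> ('l \<Rightarrow> 'l \<Rightarrow> 'l) \<Rightarrow> ('l \<Rightarrow> 'l \<Rightarrow> 'l)
   \<Rightarrow> ('l \<Rightarrow> 'l) \<Rightarrow> bool" where
  "hom_post_lie_algebra sL br dot \<alpha> \<longleftrightarrow>
     hom_lie_algebra sL br \<alpha> \<and> bilinear_map sL sL sL dot \<and>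
     (\<forall>x y z. dot (\<alpha> z) (br x y) - br (dot z x) (\<alpha> y) - br (\<alpha> x) (dot z y) = 0) \<and>
     (\<forall>x y z. dot (\<alpha> z) (dot y x) - dot (\<alpha> y) (dot z x) + dot (dot y z) (\<alpha> x)
               - dot (dot z y) (\<alpha> x) + dot (br y z) (\<alpha> x) = 0)"

definition multiplicative ::
  "('l \<Rightarrow> 'l \<Rightarrow> 'l) \<Rightarrow> ('l \<Rightarrow> 'l \<Rightarrow> 'l) \<Rightarrow> ('l \<Rightarrow> 'l) \<Rightarrow> bool" where
  "multiplicative br dot \<alpha> \<longleftrightarrow>
     (\<forall>x y. \<alpha> (br x y) = br (\<alpha> x) (\<alpha> y)) \<and> (\<forall>x y. \<alpha> (dot x y) = dot (\<alpha> x) (\<alpha> y))"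

definition hom_post_lie_module ::
  "('k::field \<Rightarrow> 'l::ab_group_add \<Rightarrow> 'l) \<Rightarrow> ('k \<Rightarrow> 'm::ab_group_add \<Rightarrow> 'm) \<Rightarrow>
   ('l \<Rightarrow> 'l \<Rightarrow> 'l) \<Rightarrow> ('l \<Rightarrow> 'l \<Rightarrow> 'l) \<Rightarrow> ('l \<Rightarrow> 'l) \<Rightarrow>
   ('m \<Rightarrow> 'm) \<Rightarrow> ('l \<Rightarrow> 'm \<Rightarrow> 'm) \<Rightarrow> ('l \<Rightarrow> 'm \<Rightarrow> 'm) \<Rightarrow> bool" where
  "hom_post_lie_module sL sM br dot \<alpha> \<alpha>M diam bull \<longleftrightarrow>
     Vector_Spaces.vector_space sM \<and> Vector_Spaces.linear sM sM \<alpha>M \<and>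
     bilinear_map sL sM sM diam \<and> bilinear_map sL sM sM bull \<and>
     (\<forall>x m. \<alpha>M (diam x m) = diam (\<alpha> x) (\<alpha>M m)) \<and>
     (\<forall>x m. \<alpha>M (bull x m) = bull (\<alpha> x) (\<alpha>M m)) \<and>
     (\<forall>x y m. diam (br x y) (\<alpha>M m) = diam (\<alpha> x) (diam y m) - diam (\<alpha> y) (diam x m)) \<and>
     (\<forall>x y m. diam (dot x y) (\<alpha>M m) = bull (\<alpha> x) (diam y m) - diam (\<alpha> y) (bull x m)) \<and>
     (\<forall>x y m. bull (br x y) (\<alpha>M m) = bull (\<alpha> x) (bull y m) - bull (\<alpha> y) (bull x m)
                 - bull (dot x y) (\<alpha>M m) + bull (dot y x) (\<alpha>M m))"

end

theory Submission
  imports Defs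
begin

text \<open>First, for a multiplicative \<open>\<alpha>\<close>, each
  \<open>\<alpha>\<^sup>n\<close> is an endomorphism of \<open>L\<close> commuting with \<open>\<alpha>\<close>, so precomposing both actions with \<open>\<alpha>\<^sup>n\<close>
  yields a module over the same algebra. Second, the Yau twist by any power \<open>q\<close>, which uses
  only axiom (i): since \<open>\<alpha>\<^sub>M\<^sup>q (x \<diamond> m) = \<alpha>\<^sup>q x \<diamond> \<alpha>\<^sub>M\<^sup>q m\<close>, every twisted axiom is \<open>(\<alpha>\<^sub>M\<^sup>q)\<^sup>2\<close> applied to the
  corresponding original axiom. Taking \<open>q = 2\<^sup>k - 1\<close> gives the theorem.\<close>

lemma linear_funpow:
  assumes "Vector_Spaces.linear s s f"
  shows "Vector_Spaces.linear s s (f ^^ j)"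
proof (induction j)
  case 0
  have "Vector_Spaces.vector_space s"
    using assms unfolding Vector_Spaces.linear_def by blast
  then show ?case using vector_space.linear_id[of s] by (simp add: id_def)
next
  case (Suc j)
  show ?case unfolding funpow.simps(2) by (rule Vector_Spaces.linear_compose[OF Suc assms])
qed

lemma funpow_equivariant:
  assumes "\<And>x m. A (d x m) = d (a x) (A m)"
  shows "(A ^^ j) (d x m) = d ((a ^^ j) x) ((A ^^ j) m)"
  by (induction j arbitrary: m) (simp_all add: assms)

lemma bilinear_map_precompose:
  assumes "bilinear_map sA sB sC f" and "Vector_Spaces.linear sA' sA g"
  shows "bilinear_map sA' sB sC (\<lambda>x y. f (g x) y)"
  using assms unfolding bilinear_map_def
  by (auto intro: Vector_Spaces.linear_compose[where f = g, unfolded o_def])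

lemma bilinear_map_postcompose:
  assumes "bilinear_map sA sB sC f" and "Vector_Spaces.linear sC sC h"
  shows "bilinear_map sA sB sC (\<lambda>x y. h (f x y))"
  using assms unfolding bilinear_map_def
  by (auto intro: Vector_Spaces.linear_compose[where g = h, unfolded o_def])

lemma hom_post_lie_module_precompose_funpow:
  assumes lin: "Vector_Spaces.linear sL sL \<alpha>"
    and mult: "multiplicative br dot \<alpha>"
    and modM: "hom_post_lie_module sL sM br dot \<alpha> \<alpha>M diam bull"
  shows "hom_post_lie_module sL sM br dot \<alpha> \<alpha>M
           (\<lambda>x m. diam ((\<alpha> ^^ n) x) m) (\<lambda>x m. bull ((\<alpha> ^^ n) x) m)"
proof -
  have bil: "bilinear_map sL sM sM (\<lambda>x m. diam ((\<alpha> ^^ n) x) m)"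
      "bilinear_map sL sM sM (\<lambda>x m. bull ((\<alpha> ^^ n) x) m)"
    using modM linear_funpow[OF lin] unfolding hom_post_lie_module_def
    by (blast intro: bilinear_map_precompose)+
  have "(\<alpha> ^^ n) (br x y) = br ((\<alpha> ^^ n) x) ((\<alpha> ^^ n) y)"
    and "(\<alpha> ^^ n) (dot x y) = dot ((\<alpha> ^^ n) x) ((\<alpha> ^^ n) y)" for x y
    using mult unfolding multiplicative_def
    by (auto intro: funpow_equivariant[where A = \<alpha> and a = \<alpha>])
  moreover have "(\<alpha> ^^ n) (\<alpha> x) = \<alpha> ((\<alpha> ^^ n) x)" for x
    by (metis funpow_swap1)
  ultimately show ?thesis
    using modM bil unfolding hom_post_lie_module_def by simp
qed

lemma hom_post_lie_module_yau_twist: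
  assumes modM: "hom_post_lie_module sL sM br dot \<alpha> \<alpha>M diam bull"
  shows "hom_post_lie_module sL sM
           (\<lambda>x y. (\<alpha> ^^ q) (br x y)) (\<lambda>x y. (\<alpha> ^^ q) (dot x y)) (\<alpha> ^^ Suc q) (\<alpha>M ^^ Suc q)
           (\<lambda>x m. (\<alpha>M ^^ q) (diam x m)) (\<lambda>x m. (\<alpha>M ^^ q) (bull x m))"
proof -
  have linM: "Vector_Spaces.linear sM sM (\<alpha>M ^^ j)" for j
    using modM linear_funpow unfolding hom_post_lie_module_def by blast
  have bil: "bilinear_map sL sM sM (\<lambda>x m. (\<alpha>M ^^ q) (diam x m))"
      "bilinear_map sL sM sM (\<lambda>x m. (\<alpha>M ^^ q) (bull x m))"
    using modM linM unfolding hom_post_lie_module_def by (blast intro: bilinear_map_postcompose)+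
  have diam_q: "diam ((\<alpha> ^^ q) x) ((\<alpha>M ^^ q) m) = (\<alpha>M ^^ q) (diam x m)"
   and bull_q: "bull ((\<alpha> ^^ q) x) ((\<alpha>M ^^ q) m) = (\<alpha>M ^^ q) (bull x m)" for x m
    using modM unfolding hom_post_lie_module_def
    by (auto intro: funpow_equivariant[symmetric])
  have diff: "(\<alpha>M ^^ q) (u - v) = (\<alpha>M ^^ q) u - (\<alpha>M ^^ q) v"
   and add: "(\<alpha>M ^^ q) (u + v) = (\<alpha>M ^^ q) u + (\<alpha>M ^^ q) v" for u v
    using linM[of q] by (simp_all add: linear_iff_module_hom module_hom.diff module_hom.add)
  have comm: "\<alpha>M ((\<alpha>M ^^ q) m) = (\<alpha>M ^^ q) (\<alpha>M m)" for m
    by (metis funpow_swap1)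
  show ?thesis
    using modM bil linM[of "Suc q"] unfolding hom_post_lie_module_def funpow_Suc_right o_apply
    by (simp add: diam_q bull_q diff add comm)
qed

theorem mainTheorem7:
  fixes sL :: "'k::field \<Rightarrow> 'l::ab_group_add \<Rightarrow> 'l"
    and sM :: "'k \<Rightarrow> 'm::ab_group_add \<Rightarrow> 'm"
    and br dot :: "'l \<Rightarrow> 'l \<Rightarrow> 'l" and \<alpha> :: "'l \<Rightarrow> 'l"
    and \<alpha>M :: "'m \<Rightarrow> 'm" and diam bull :: "'l \<Rightarrow> 'm \<Rightarrow> 'm"
    and k n :: nat
  assumes char: "(2::'k) \<noteq> 0"
    and post: "hom_post_lie_algebra sL br dot \<alpha>"
    and mult: "multiplicative br dot \<alpha>"
    and modM: "hom_post_lie_module sL sM br dot \<alpha> \<alpha>M diam bull"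
  shows "hom_post_lie_module sL sM
           (\<lambda>x y. (\<alpha> ^^ (2 ^ k - 1)) (br x y))
           (\<lambda>x y. (\<alpha> ^^ (2 ^ k - 1)) (dot x y))
           (\<alpha> ^^ (2 ^ k))
           (\<alpha>M ^^ (2 ^ k))
           (\<lambda>x m. (\<alpha>M ^^ (2 ^ k - 1)) (diam ((\<alpha> ^^ n) x) m))
           (\<lambda>x m. (\<alpha>M ^^ (2 ^ k - 1)) (bull ((\<alpha> ^^ n) x) m))"
proof -
  have "Vector_Spaces.linear sL sL \<alpha>"
    using post unfolding hom_post_lie_algebra_def hom_lie_algebra_def by blast
  then have "hom_post_lie_module sL sM br dot \<alpha> \<alpha>M
               (\<lambda>x m. diam ((\<alpha> ^^ n) x) m) (\<lambda>x m. bull ((\<alpha> ^^ n) x) m)"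
    using mult modM by (rule hom_post_lie_module_precompose_funpow)
  moreover have "Suc (2 ^ k - 1) = (2::nat) ^ k" by simp
  ultimately show ?thesis
    using hom_post_lie_module_yau_twist[where q = "2 ^ k - 1"] by metis
qed

end
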